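(* Let $f:[0,1]\to(0,1)$ be a $C^3$ function whose unique fixed point is $1/2$, and assume $f'(1/2)=0$. Let $(\alpha_n,l_n)_{n\ge0}$ be an urn process associated to $f$. Then: (i) if $f''(1/2)>0$, then $\mathbb{E}[\delta_\infty^-]<+\infty$; (ii) if $f''(1/2)<0$, then $\mathbb{E}[\delta_\infty^+]<+\infty$; (iii) if $f''(1/2)=0$, then $\mathbb{E}[\delta_\infty^-]$ and $\mathbb{E}[\delta_\infty^+]$ are both finite. In all cases, $\delta_n$ converges almost surely to a limit $\delta_\infty$ (in $[-\infty,+\infty]$) and $\mathbb{E}[\delta_\infty]$ is well defined.
   Context: Urn process associated to $f$: a Markov chain $((\alpha_n,l_n),n\ge 0)$ on $[0,1]\times(0,+\infty)$ (arbitrary initial state) with $l_{n+1}=l_n+1$, and $\alpha_{n+1}=(l_n\alpha_n+1)/(l_n+1)$ with probability $f(\alpha_n)$, $\alpha_{n+1}=l_n\alpha_n/(l_n+1)$ with probability $1-f(\alpha_n)$. $\delta_n:=\sum_{k=0}^n(2f(\alpha_k)-1)$, $\delta^-_\infty:=\sum_{k\ge0}(2f(\alpha_k)-1)_-$, $\delta^+_\infty:=\sum_{k\ge0}(2f(\alpha_k)-1)_+$. *)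

theory Defs
  imports "HOL-Probability.Probability"
begin

text \<open>The conditional law is expressed on the generating
pi-system of cylinder events of the natural filtration.\<close>

definition urn_up :: "real \<Rightarrow> real \<Rightarrow> real" where
  "urn_up a l = (l * a + 1) / (l + 1)"

definition urn_down :: "real \<Rightarrow> real \<Rightarrow> real" where
  "urn_down a l = l * a / (l + 1)"

definition urn_process ::
  "'a measure \<Rightarrow> (real \<Rightarrow> real) \<Rightarrow> (nat \<Rightarrow> 'a \<Rightarrow> real) \<Rightarrow> (nat \<Rightarrow> 'a \<Rightarrow> real) \<Rightarrow> bool" where
  "urn_process M f \<alpha> l \<longleftrightarrow>
     prob_space M \<and>
     (\<forall>n. \<alpha> n \<in> borel_measurable M) \<and>
     (\<exists>a0 l0. 0 \<le> a0 \<and> a0 \<le> 1 \<and> 0 < l0 \<and>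
        (\<forall>\<omega>\<in>space M. \<alpha> 0 \<omega> = a0 \<and> l 0 \<omega> = l0)) \<and>
     (\<forall>n. \<forall>\<omega>\<in>space M. l (Suc n) \<omega> = l n \<omega> + 1) \<and>
     (\<forall>n. \<forall>\<omega>\<in>space M. \<alpha> (Suc n) \<omega> = urn_up (\<alpha> n \<omega>) (l n \<omega>) \<or>
                         \<alpha> (Suc n) \<omega> = urn_down (\<alpha> n \<omega>) (l n \<omega>)) \<and>
     (\<forall>n (B :: nat \<Rightarrow> real set). (\<forall>i. B i \<in> sets borel) \<longrightarrow>
        measure M {\<omega> \<in> space M. (\<forall>i\<le>n. \<alpha> i \<omega> \<in> B i) \<and>
                                 \<alpha> (Suc n) \<omega> = urn_up (\<alpha> n \<omega>) (l n \<omega>)}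
        = (\<integral>\<omega>. indicator {\<omega> \<in> space M. \<forall>i\<le>n. \<alpha> i \<omega> \<in> B i} \<omega> * f (\<alpha> n \<omega>) \<partial>M))"

definition urn_delta :: "(real \<Rightarrow> real) \<Rightarrow> (nat \<Rightarrow> 'a \<Rightarrow> real) \<Rightarrow> nat \<Rightarrow> 'a \<Rightarrow> real" where
  "urn_delta f \<alpha> n \<omega> = (\<Sum>k\<le>n. 2 * f (\<alpha> k \<omega>) - 1)"

definition urn_delta_minus :: "(real \<Rightarrow> real) \<Rightarrow> (nat \<Rightarrow> 'a \<Rightarrow> real) \<Rightarrow> 'a \<Rightarrow> ennreal" where
  "urn_delta_minus f \<alpha> \<omega> = (\<Sum>k. ennreal (max 0 (- (2 * f (\<alpha> k \<omega>) - 1))))"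

definition urn_delta_plus :: "(real \<Rightarrow> real) \<Rightarrow> (nat \<Rightarrow> 'a \<Rightarrow> real) \<Rightarrow> 'a \<Rightarrow> ennreal" where
  "urn_delta_plus f \<alpha> \<omega> = (\<Sum>k. ennreal (max 0 (2 * f (\<alpha> k \<omega>) - 1)))"

end

theory Submission
  imports Defs
begin

text \<open>Expanding \<open>f\<close> to second order at its fixed point, \<open>2 f(x) - 1 = f''(1/2) (x - 1/2)\<^sup>2 + O(\<bar>x - 1/2\<bar>\<^sup>3)\<close>,
  so when \<open>f''(1/2) \<ge> 0\<close> the negative parts of the increments of \<open>\<delta>\<^sub>n\<close> are \<open>O(\<bar>\<alpha>\<^sub>n - 1/2\<bar>\<^sup>3)\<close>,
  and symmetrically for \<open>f''(1/2) \<le> 0\<close>. Since \<open>1/2\<close> is the only fixed point and \<open>f'(1/2) = 0\<close>,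
  the urn drifts towards \<open>1/2\<close>: \<open>(x - 1/2)(x - f x)\<close> is at least \<open>c (x - 1/2)\<^sup>2\<close> everywhere and
  \<open>3/4 (x - 1/2)\<^sup>2\<close> near \<open>1/2\<close>. A Lyapunov function \<open>(x - 1/2)\<^sup>2\<^sup>p + A (x - 1/2)\<^sup>2\<^sup>m\<close> then contracts
  in expectation at rate \<open>(3p/2)/l\<^sub>n\<close>, which gives \<open>E (\<alpha>\<^sub>n - 1/2)\<^sup>2\<^sup>p = O(n\<^sup>-\<^sup>p)\<close> for \<open>p = 1, 2\<close>, hence
  \<open>E \<bar>\<alpha>\<^sub>n - 1/2\<bar>\<^sup>3 = O(n\<^sup>-\<^sup>3\<^sup>/\<^sup>2)\<close>, a summable bound. Thus \<open>\<delta>\<^sup>-\<^sub>\<infinity>\<close> (resp. \<open>\<delta>\<^sup>+\<^sub>\<infinity>\<close>)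
  has finite expectation; it is then finite almost surely, which forces \<open>\<delta>\<^sub>n\<close> to converge in the
  extended reals.\<close>

lemma abs_diff_le_of_deriv_bound:
  fixes g g' :: "real \<Rightarrow> real"
  assumes deriv: "\<And>y. y \<in> {0..1} \<Longrightarrow> (g has_real_derivative g' y) (at y within {0..1})"
    and bound: "\<And>y. y \<in> {0..1} \<Longrightarrow> \<bar>g' y\<bar> \<le> B * \<bar>y - 1/2\<bar> ^ k"
    and "B \<ge> 0" and x: "x \<in> {0..1}"
  shows "\<bar>g x - g (1/2)\<bar> \<le> B * \<bar>x - 1/2\<bar> ^ Suc k"
proof -
  define S where "S = closed_segment (1/2) x"
  have S_unit: "S \<subseteq> {0..1}"
    unfolding S_def using x by (simp add: closed_segment_eq_real_ivl split: if_splits)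
  have "norm (g x - g (1/2)) \<le> (B * \<bar>x - 1/2\<bar> ^ k) * norm (x - 1/2)"
  proof (rule field_differentiable_bound[of S])
    fix z assume z: "z \<in> S"
    show "(g has_field_derivative g' z) (at z within S)"
      using deriv S_unit z by (meson DERIV_subset subsetD)
    have "\<bar>z - 1/2\<bar> \<le> \<bar>x - 1/2\<bar>"
      using z unfolding S_def by (auto simp: closed_segment_eq_real_ivl split: if_splits)
    hence "\<bar>z - 1/2\<bar> ^ k \<le> \<bar>x - 1/2\<bar> ^ k" by (simp add: power_mono)
    thus "norm (g' z) \<le> B * \<bar>x - 1/2\<bar> ^ k"
      using bound S_unit z \<open>B \<ge> 0\<close> by (smt (verit) mult_left_mono real_norm_def subsetD)
  qed (auto simp: S_def)
  thus ?thesis by (simp add: mult.commute mult.left_commute)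
qed

lemma taylor_order_two_at_half:
  fixes f f1 f2 f3 :: "real \<Rightarrow> real"
  assumes d1: "\<forall>x\<in>{0..1}. (f has_real_derivative f1 x) (at x within {0..1})"
    and d2: "\<forall>x\<in>{0..1}. (f1 has_real_derivative f2 x) (at x within {0..1})"
    and d3: "\<forall>x\<in>{0..1}. (f2 has_real_derivative f3 x) (at x within {0..1})"
    and cont3: "continuous_on {0..1} f3"
  obtains B where "B \<ge> 0" and "\<And>x. x \<in> {0..1} \<Longrightarrow>
    \<bar>f x - f (1/2) - f1 (1/2) * (x - 1/2) - f2 (1/2) / 2 * (x - 1/2)^2\<bar> \<le> B * \<bar>x - 1/2\<bar>^3"
proof -
  obtain B where B: "B \<ge> 0" "\<And>y. y \<in> {0..1} \<Longrightarrow> \<bar>f3 y\<bar> \<le> B"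
  proof -
    have "bounded (f3 ` {0..1})" by (rule compact_imp_bounded, rule compact_continuous_image[OF cont3]) simp
    then obtain B0 where "\<forall>y\<in>f3 ` {0..1}. norm y \<le> B0" by (auto simp: bounded_iff)
    thus thesis by (intro that[of "max B0 0"]) (auto simp: le_max_iff_disj)
  qed
  define a where "a = f2 (1/2)"
  have R1: "\<bar>f2 y - a\<bar> \<le> B * \<bar>y - 1/2\<bar> ^ 1" if "y \<in> {0..1}" for y
    using abs_diff_le_of_deriv_bound[of f2 f3 B 0 y] d3 B that by (simp add: a_def)
  have R2: "\<bar>(f1 y - f1 (1/2)) - a * (y - 1/2)\<bar> \<le> B * \<bar>y - 1/2\<bar> ^ 2" if "y \<in> {0..1}" for y
  proof -
    have "((\<lambda>z. f1 z - a * (z - 1/2)) has_real_derivative f2 z - a) (at z within {0..1})"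
      if "z \<in> {0..1}" for z
      using d2 that by (auto intro!: derivative_eq_intros)
    from abs_diff_le_of_deriv_bound[OF this R1 B(1) \<open>y \<in> {0..1}\<close>] show ?thesis
      by (simp add: numeral_2_eq_2 algebra_simps)
  qed
  show thesis
  proof (rule that[OF B(1)])
    fix x :: real assume x: "x \<in> {0..1}"
    have "((\<lambda>z. f z - f1 (1/2) * (z - 1/2) - a/2 * (z - 1/2)^2) has_real_derivative
        (f1 z - f1 (1/2)) - a * (z - 1/2)) (at z within {0..1})" if "z \<in> {0..1}" for z
      using d1 that by (auto intro!: derivative_eq_intros)
    from abs_diff_le_of_deriv_bound[OF this R2 B(1) x]
    show "\<bar>f x - f (1/2) - f1 (1/2) * (x - 1/2) - f2 (1/2) / 2 * (x - 1/2)^2\<bar> \<le> B * \<bar>x - 1/2\<bar>^3"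
      by (simp add: numeral_3_eq_3 a_def algebra_simps)
  qed
qed

lemma neg_part_le_of_taylor:
  fixes y u a B :: real
  assumes "\<bar>y - 1/2 - a/2 * u^2\<bar> \<le> B * \<bar>u\<bar>^3" and "0 \<le> a"
  shows "max 0 (- (2 * y - 1)) \<le> 2 * B * \<bar>u\<bar>^3"
  using abs_le_D2[OF assms(1)] order_trans[OF abs_ge_zero assms(1)] mult_nonneg_nonneg[OF \<open>0 \<le> a\<close> zero_le_power2[of u]]
  by linarith

lemma pos_part_le_of_taylor:
  fixes y u a B :: real
  assumes "\<bar>y - 1/2 - a/2 * u^2\<bar> \<le> B * \<bar>u\<bar>^3" and "a \<le> 0"
  shows "max 0 (2 * y - 1) \<le> 2 * B * \<bar>u\<bar>^3"
  using abs_le_D1[OF assms(1)] order_trans[OF abs_ge_zero assms(1)] mult_nonpos_nonneg[OF \<open>a \<le> 0\<close> zero_le_power2[of u]]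
  by linarith

lemma drift_pos_off_fixed_point:
  fixes f :: "real \<Rightarrow> real"
  assumes cont: "continuous_on {0..1} f" and "0 < f 0" and "f 1 < 1"
    and fix_unique: "\<forall>x\<in>{0..1}. f x = x \<longrightarrow> x = 1/2"
    and x: "x \<in> {0..1}" "x \<noteq> 1/2"
  shows "0 < (x - 1/2) * (x - f x)"
proof -
  have cont_diff: "continuous_on {a..b} (\<lambda>t. f t - t)" if "0 \<le> a" "b \<le> 1" for a b
    using that by (intro continuous_intros continuous_on_subset[OF cont]) auto
  consider "x < 1/2" | "x > 1/2" using x(2) by linarith
  thus ?thesis
  proof cases
    case 1
    have "f x > x"
    proof (rule ccontr)
      assume "\<not> f x > x"
      then obtain t where "0 \<le> t" "t \<le> x" "f t - t = 0"
        using IVT2'[of "\<lambda>t. f t - t" x 0 0] cont_diff[of 0 x] x \<open>0 < f 0\<close> by auto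
      thus False using fix_unique x 1 by auto
    qed
    thus ?thesis using 1 by (simp add: mult_neg_neg)
  next
    case 2
    have "f x < x"
    proof (rule ccontr)
      assume "\<not> f x < x"
      then obtain t where "x \<le> t" "t \<le> 1" "f t - t = 0"
        using IVT2'[of "\<lambda>t. f t - t" 1 0 x] cont_diff[of x 1] x \<open>f 1 < 1\<close> by auto
      thus False using fix_unique x 2 by auto
    qed
    thus ?thesis using 2 by simp
  qed
qed

lemma drift_near_fixed_point:
  fixes f :: "real \<Rightarrow> real" and a B :: real
  assumes taylor: "\<And>x. x \<in> {0..1} \<Longrightarrow> \<bar>f x - 1/2 - a/2 * (x - 1/2)^2\<bar> \<le> B * \<bar>x - 1/2\<bar>^3"
    and "B \<ge> 0"
  obtains \<delta> where "\<delta> > 0"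
    and "\<And>x. x \<in> {0..1} \<Longrightarrow> \<bar>x - 1/2\<bar> < \<delta> \<Longrightarrow> 3/4 * (x - 1/2)^2 \<le> (x - 1/2) * (x - f x)"
proof -
  define P where "P = \<bar>a\<bar>/2 + B"
  have "P \<ge> 0" using \<open>B \<ge> 0\<close> by (simp add: P_def)
  define \<delta> where "\<delta> = 1 / (4 * P + 1)"
  have "\<delta> > 0" using \<open>P \<ge> 0\<close> by (simp add: \<delta>_def)
  have "\<delta> * (4 * P + 1) = 1" using \<open>P \<ge> 0\<close> by (simp add: \<delta>_def)
  moreover have "\<delta> * (4 * P + 1) = 4 * (\<delta> * P) + \<delta>" by (simp add: algebra_simps)
  ultimately
  have \<delta>_small: "\<delta> * (\<bar>a\<bar>/2 + B) \<le> 1/4" using \<open>\<delta> > 0\<close> unfolding P_def by linarith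
  show thesis
  proof (rule that[OF \<open>\<delta> > 0\<close>])
    fix x :: real assume x: "x \<in> {0..1}" "\<bar>x - 1/2\<bar> < \<delta>"
    define u where "u = x - 1/2"
    have "\<bar>f x - 1/2\<bar> \<le> \<bar>a\<bar>/2 * u^2 + B * \<bar>u\<bar>^3"
    proof -
      have "\<bar>a/2 * u^2\<bar> = \<bar>a\<bar>/2 * u^2" by (simp add: abs_mult)
      thus ?thesis using taylor[OF x(1)] unfolding u_def[symmetric] by linarith
    qed
    also have "\<dots> = \<bar>u\<bar> * (\<bar>u\<bar> * (\<bar>a\<bar>/2 + B * \<bar>u\<bar>))"
      by (simp add: power2_eq_square power3_eq_cube algebra_simps)
    also have "\<dots> \<le> \<bar>u\<bar> * (1/4)"
    proof (rule mult_left_mono)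
      have "\<bar>u\<bar> \<le> 1" using x(1) by (auto simp: u_def)
      hence "B * \<bar>u\<bar> \<le> B" using \<open>B \<ge> 0\<close> by (simp add: mult_left_le)
      hence "\<bar>u\<bar> * (\<bar>a\<bar>/2 + B * \<bar>u\<bar>) \<le> \<delta> * (\<bar>a\<bar>/2 + B)"
        using x(2) \<open>B \<ge> 0\<close> by (intro mult_mono) (auto simp: u_def)
      thus "\<bar>u\<bar> * (\<bar>a\<bar>/2 + B * \<bar>u\<bar>) \<le> 1/4" using \<delta>_small by linarith
    qed simp
    finally have "\<bar>f x - 1/2\<bar> \<le> \<bar>u\<bar> / 4" by simp
    have "u * (f x - 1/2) \<le> \<bar>u\<bar> * \<bar>f x - 1/2\<bar>"
      by (metis abs_ge_self abs_mult)
    also have "\<dots> \<le> \<bar>u\<bar> * (\<bar>u\<bar> / 4)"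
      using \<open>\<bar>f x - 1/2\<bar> \<le> \<bar>u\<bar> / 4\<close> by (rule mult_left_mono) simp
    also have "\<dots> = u^2 / 4" by (simp add: power2_eq_square abs_mult_self_eq)
    finally have "u * (f x - 1/2) \<le> u^2 / 4" .
    moreover have "u * (x - f x) = u^2 - u * (f x - 1/2)"
      unfolding power2_eq_square right_diff_distrib[symmetric] by (simp add: u_def)
    ultimately have "3/4 * u^2 \<le> u * (x - f x)" by linarith
    thus "3/4 * (x - 1/2)^2 \<le> (x - 1/2) * (x - f x)" by (simp only: u_def)
  qed
qed

lemma drift_global:
  fixes f :: "real \<Rightarrow> real"
  assumes cont: "continuous_on {0..1} f"
    and pos: "\<And>x. x \<in> {0..1} \<Longrightarrow> x \<noteq> 1/2 \<Longrightarrow> 0 < (x - 1/2) * (x - f x)"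
    and "\<delta> > 0"
    and near: "\<And>x. x \<in> {0..1} \<Longrightarrow> \<bar>x - 1/2\<bar> < \<delta> \<Longrightarrow> 3/4 * (x - 1/2)^2 \<le> (x - 1/2) * (x - f x)"
  obtains c where "c > 0" and "\<And>x. x \<in> {0..1} \<Longrightarrow> c * (x - 1/2)^2 \<le> (x - 1/2) * (x - f x)"
proof -
  define K where "K = {0..1} \<inter> {x. \<delta> \<le> \<bar>x - 1/2\<bar>}"
  define g where "g x = (x - f x) / (x - 1/2)" for x
  have K_unit: "x \<in> {0..1}" "x \<noteq> 1/2" if "x \<in> K" for x
    using that \<open>\<delta> > 0\<close> by (auto simp: K_def)
  have "compact K" unfolding K_def
    by (intro compact_Int_closed compact_Icc closed_Collect_le continuous_intros)
  moreover have "continuous_on K g"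
    unfolding g_def using K_unit
    by (intro continuous_intros continuous_on_subset[OF cont]) auto
  ultimately obtain c0 where c0: "c0 > 0" "\<And>x. x \<in> K \<Longrightarrow> c0 \<le> g x"
  proof (cases "K = {}")
    case False
    then obtain xm where "xm \<in> K" "\<forall>y\<in>K. g xm \<le> g y"
      using continuous_attains_inf[OF \<open>compact K\<close> _ \<open>continuous_on K g\<close>] by blast
    moreover have "0 < g xm"
      using pos[OF K_unit[OF \<open>xm \<in> K\<close>]] K_unit[OF \<open>xm \<in> K\<close>]
      by (auto simp: g_def zero_less_divide_iff zero_less_mult_iff)
    ultimately show thesis using that by blast
  qed (use that[of 1] in auto)
  show thesis
  proof (rule that[of "min (3/4) c0"])
    show "0 < min (3/4) c0" using c0 by simp
    fix x :: real assume x: "x \<in> {0..1}"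
    show "min (3/4) c0 * (x - 1/2)^2 \<le> (x - 1/2) * (x - f x)"
    proof (cases "\<bar>x - 1/2\<bar> < \<delta>")
      case True
      thus ?thesis using near[OF x True] by (smt (verit) min.cobounded1 mult_right_mono zero_le_power2)
    next
      case False
      hence "x \<in> K" using x by (simp add: K_def)
      hence "min (3/4) c0 * (x - 1/2)^2 \<le> g x * (x - 1/2)^2"
        by (intro mult_right_mono min.coboundedI2 c0(2)) auto
      also have "\<dots> = (x - 1/2) * (x - f x)"
        using K_unit[OF \<open>x \<in> K\<close>] by (simp add: g_def power2_eq_square)
      finally show ?thesis .
    qed
  qed
qed

lemma power_add_taylor_remainder:
  fixes y h :: real
  shows "\<bar>(y+h)^k - y^k - real k * y^(k-1) * h\<bar> \<le> real k * (real k - 1) / 2 * (\<bar>y\<bar>+\<bar>h\<bar>)^(k-2) * h^2"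
proof (induction k)
  case 0 then show ?case by simp
next
  case (Suc k)
  define E where "E = (y+h)^k - y^k - real k * y^(k-1) * h"
  show ?case
  proof (cases k)
    case 0 then show ?thesis by simp
  next
    case (Suc j)
    have eq: "(y+h)^(Suc k) - y^(Suc k) - real (Suc k) * y^k * h = (y+h) * E + real k * y^(k-1) * h^2"
      unfolding E_def using Suc by (simp add: algebra_simps power2_eq_square)
    have "\<bar>(y+h) * E\<bar> \<le> (\<bar>y\<bar>+\<bar>h\<bar>) * (real k * (real k - 1) / 2 * (\<bar>y\<bar>+\<bar>h\<bar>)^(k-2) * h^2)"
      unfolding abs_mult E_def by (intro mult_mono Suc.IH) (auto simp: abs_triangle_ineq)
    also have "\<dots> = real k * (real k - 1) / 2 * (\<bar>y\<bar>+\<bar>h\<bar>)^(k-1) * h^2"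
    proof (cases j)
      case 0 then show ?thesis using Suc by simp
    next
      case (Suc i)
      have "(\<bar>y\<bar>+\<bar>h\<bar>) * (\<bar>y\<bar>+\<bar>h\<bar>)^(k-2) = (\<bar>y\<bar>+\<bar>h\<bar>)^(k-1)"
        using Suc \<open>k = Suc j\<close> by simp
      moreover have "(\<bar>y\<bar>+\<bar>h\<bar>) * (real k * (real k - 1) / 2 * (\<bar>y\<bar>+\<bar>h\<bar>)^(k-2) * h^2)
          = real k * (real k - 1) / 2 * ((\<bar>y\<bar>+\<bar>h\<bar>) * (\<bar>y\<bar>+\<bar>h\<bar>)^(k-2)) * h^2"
        by (simp only: ac_simps)
      ultimately show ?thesis by simp
    qed
    finally have a1: "\<bar>(y+h) * E\<bar> \<le> real k * (real k - 1) / 2 * (\<bar>y\<bar>+\<bar>h\<bar>)^(k-1) * h^2" .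
    have "\<bar>real k * y^(k-1) * h^2\<bar> = real k * \<bar>y\<bar>^(k-1) * h^2" by (simp add: abs_mult power_abs)
    also have "\<dots> \<le> real k * (\<bar>y\<bar>+\<bar>h\<bar>)^(k-1) * h^2"
      by (intro mult_right_mono mult_left_mono power_mono) auto
    finally have a2: "\<bar>real k * y^(k-1) * h^2\<bar> \<le> real k * (\<bar>y\<bar>+\<bar>h\<bar>)^(k-1) * h^2" .
    have "\<bar>(y+h)^(Suc k) - y^(Suc k) - real (Suc k) * y^(Suc k - 1) * h\<bar>
        = \<bar>(y+h) * E + real k * y^(k-1) * h^2\<bar>" using eq by simp
    also have "\<dots> \<le> \<bar>(y+h) * E\<bar> + \<bar>real k * y^(k-1) * h^2\<bar>" by (rule abs_triangle_ineq)
    also have "\<dots> \<le> real k * (real k - 1) / 2 * (\<bar>y\<bar>+\<bar>h\<bar>)^(k-1) * h^2 + real k * (\<bar>y\<bar>+\<bar>h\<bar>)^(k-1) * h^2"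
      using a1 a2 by linarith
    also have "\<dots> = real (Suc k) * (real (Suc k) - 1) / 2 * (\<bar>y\<bar>+\<bar>h\<bar>)^(Suc k - 2) * h^2"
      using Suc by (simp add: algebra_simps add_divide_distrib)
    finally show ?thesis .
  qed
qed

lemma power_add_le:
  fixes y h r :: real
  assumes "\<bar>h\<bar> \<le> r"
  shows "(y+h)^k \<le> y^k + real k * y^(k-1) * h + real k * (real k - 1) / 2 * (\<bar>y\<bar>+r)^(k-2) * r^2"
proof -
  have C: "real k * (real k - 1) / 2 \<ge> 0" by (cases k) auto
  have P: "(\<bar>y\<bar>+\<bar>h\<bar>)^(k-2) * h^2 \<le> (\<bar>y\<bar>+r)^(k-2) * r^2"
  proof (rule mult_mono)
    show "h^2 \<le> r^2" using assms by (metis abs_ge_zero power2_abs power_mono)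
    show "(\<bar>y\<bar>+\<bar>h\<bar>)^(k-2) \<le> (\<bar>y\<bar>+r)^(k-2)" using assms by (intro power_mono) auto
  qed (use assms abs_ge_zero[of h] in auto)
  have "real k * (real k - 1) / 2 * (\<bar>y\<bar>+\<bar>h\<bar>)^(k-2) * h^2 \<le> real k * (real k - 1) / 2 * (\<bar>y\<bar>+r)^(k-2) * r^2"
    using mult_left_mono[OF P C] by (simp only: mult.assoc)
  moreover have "(y+h)^k - y^k - real k * y^(k-1) * h \<le> \<bar>(y+h)^k - y^k - real k * y^(k-1) * h\<bar>" by (rule abs_ge_self)
  ultimately show ?thesis using power_add_taylor_remainder[of y h k] by linarith
qed

lemma binary_step_power_le:
  fixes x F N :: real and k :: nat
  assumes x: "x \<in> {0..1}" and N: "N \<ge> 1" and F: "0 \<le> F" "F \<le> 1"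
  shows "F * (x + (1-x)/N - 1/2)^k + (1-F) * (x - x/N - 1/2)^k
     \<le> (x-1/2)^k - real k * (x-1/2)^(k-1) * (x-F) / N
        + real k * (real k - 1) / 2 * (\<bar>x-1/2\<bar> + 1/N)^(k-2) / N^2"
proof -
  define u where "u = x - 1/2"
  define R where "R = real k * (real k - 1) / 2 * (\<bar>u\<bar> + 1/N)^(k-2) * (1/N)^2"
  have h1: "\<bar>(1-x)/N\<bar> \<le> 1/N" using x N by (auto simp: divide_simps)
  have h2: "\<bar>-x/N\<bar> \<le> 1/N" using x N by (auto simp: divide_simps)
  have e1: "(u + (1-x)/N)^k \<le> u^k + real k * u^(k-1) * ((1-x)/N) + R"
    using power_add_le[OF h1, of u k] unfolding R_def by simp
  have e2: "(u + -x/N)^k \<le> u^k + real k * u^(k-1) * (-x/N) + R"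
    using power_add_le[OF h2, of u k] unfolding R_def by simp
  have "F * (u + (1-x)/N)^k + (1-F) * (u + -x/N)^k
      \<le> F * (u^k + real k * u^(k-1) * ((1-x)/N) + R) + (1-F) * (u^k + real k * u^(k-1) * (-x/N) + R)"
    using e1 e2 F by (intro add_mono mult_left_mono) auto
  also have "\<dots> = u^k + real k * u^(k-1) * ((F*(1-x) - (1-F)*x)/N) + R"
    by (simp add: algebra_simps add_divide_distrib diff_divide_distrib)
  also have "(F*(1-x) - (1-F)*x)/N = - ((x - F)/N)"
  proof -
    have "F*(1-x) - (1-F)*x = - (x - F)" by (simp add: algebra_simps)
    thus ?thesis by (metis minus_divide_left)
  qed
  finally have fin: "F * (u + (1-x)/N)^k + (1-F) * (u + -x/N)^k \<le> u^k + real k * u^(k-1) * (- ((x - F)/N)) + R" .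
  have a: "x + (1-x)/N - 1/2 = u + (1-x)/N" "x - x/N - 1/2 = u + -x/N" by (simp_all add: u_def)
  have b: "real k * u^(k-1) * (- ((x - F)/N)) = - (real k * u^(k-1) * (x-F) / N)" by simp
  have c: "R = real k * (real k - 1) / 2 * (\<bar>u\<bar> + 1/N)^(k-2) / N^2"
    unfolding R_def by (simp add: power_divide)
  show ?thesis using fin unfolding a b c u_def[symmetric] by linarith
qed

definition lyapunov :: "nat \<Rightarrow> nat \<Rightarrow> real \<Rightarrow> real \<Rightarrow> real" where
  "lyapunov p m A x = (x - 1/2)^(2*p) + A * (x - 1/2)^(2*m)"

definition lyapunov_remainder :: "nat \<Rightarrow> nat \<Rightarrow> real \<Rightarrow> real \<Rightarrow> real \<Rightarrow> real" where
  "lyapunov_remainder p m A N x =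
     real p * (2 * real p - 1) * (\<bar>x - 1/2\<bar> + 1/N)^(2*p-2)
     + A * (real m * (2 * real m - 1)) * (\<bar>x - 1/2\<bar> + 1/N)^(2*m-2)"

lemma lyapunov_nonneg: "A \<ge> 0 \<Longrightarrow> 0 \<le> lyapunov p m A x"
  unfolding lyapunov_def by (simp add: power_mult)

lemma lyapunov_le:
  assumes "A \<ge> 0" "x \<in> {0..1}"
  shows "lyapunov p m A x \<le> 1 + A"
proof -
  have "\<bar>x - 1/2\<bar> \<le> 1" using assms(2) by auto
  hence power_le: "(x - 1/2)^k \<le> 1" for k
    by (metis abs_ge_self abs_ge_zero order_trans power_abs power_le_one)
  show ?thesis
    using power_le[of "2*p"] mult_left_le[OF power_le[of "2*m"] \<open>A \<ge> 0\<close>]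
    unfolding lyapunov_def by linarith
qed

lemma lyapunov_ge_moment: "A \<ge> 0 \<Longrightarrow> (x - 1/2)^(2*p) \<le> lyapunov p m A x"
  unfolding lyapunov_def by (simp add: power_mult)

text \<open>With \<open>s = (x - 1/2)\<^sup>2\<close> and \<open>w = (x - 1/2)(x - f x)\<close>. Near \<open>1/2\<close> the bound \<open>w \<ge> 3/4 s\<close> gives
  each power \<open>s\<^sup>k\<close> the rate \<open>3k/2 \<ge> 3p/2\<close>; away from \<open>1/2\<close> only \<open>w \<ge> c s\<close> is available, and \<open>A\<close>
  is chosen so that there the term \<open>A s\<^sup>m\<close> alone, with rate \<open>2mc \<ge> 3p\<close>, dominates the whole function.\<close>
lemma lyapunov_drift_ge:
  fixes s w c \<delta> A :: real
  assumes "0 \<le> s" "s \<le> 1" "c > 0" "\<delta> > 0"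
    and glob: "c * s \<le> w" and near: "s < \<delta>^2 \<Longrightarrow> 3/4 * s \<le> w"
    and p: "1 \<le> p" "p \<le> m" and mc: "3 * real p / 2 \<le> real m * c"
    and A: "A = (3 * real p / 2) / (real m * c * \<delta>^(2*m))"
  shows "(3 * real p / 2) * (s^p + A * s^m) \<le> 2 * real p * (s^(p-1) * w) + A * (2 * real m * (s^(m-1) * w))"
proof -
  define \<kappa> where "\<kappa> = 3 * real p / 2"
  have "A \<ge> 0" using A \<open>c > 0\<close> \<open>\<delta> > 0\<close> by simp
  have "0 \<le> A * s^m" using \<open>A \<ge> 0\<close> \<open>0 \<le> s\<close> by simp
  have "w \<ge> 0" using glob \<open>c > 0\<close> \<open>0 \<le> s\<close> by (meson mult_nonneg_nonneg less_imp_le order_trans)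
  have power_pred: "s^(k-1) * s = s^k" if "k \<ge> 1" for k
    using that by (simp flip: power_Suc2)
  show ?thesis
    unfolding \<kappa>_def[symmetric] distrib_left
  proof (cases "s < \<delta>^2")
    case True
    have rate: "3 * real k / 2 * s^k \<le> 2 * real k * (s^(k-1) * w)" if "k \<ge> 1" for k
    proof -
      have "3 * real k / 2 * s^k = 2 * real k * s^(k-1) * (3/4 * s)"
        by (simp add: power_pred[OF that, symmetric] algebra_simps)
      also have "\<dots> \<le> 2 * real k * s^(k-1) * w"
        using \<open>0 \<le> s\<close> by (intro mult_left_mono near[OF True]) simp
      finally show ?thesis by (simp add: mult.assoc)
    qed
    have "\<kappa> * (A * s^m) \<le> 3 * real m / 2 * (A * s^m)"
      using p \<open>0 \<le> A * s^m\<close> unfolding \<kappa>_def by (intro mult_right_mono) auto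
    also have "\<dots> = A * (3 * real m / 2 * s^m)" by simp
    also have "\<dots> \<le> A * (2 * real m * (s^(m-1) * w))"
      using rate[of m] p \<open>A \<ge> 0\<close> by (intro mult_left_mono) auto
    finally show "\<kappa> * s^p + \<kappa> * (A * s^m) \<le> 2 * real p * (s^(p-1) * w) + A * (2 * real m * (s^(m-1) * w))"
      using rate[OF p(1)] unfolding \<kappa>_def by linarith
  next
    case False
    hence "\<delta>^(2*m) \<le> s^m"
      using \<open>\<delta> > 0\<close> power_mono[of "\<delta>^2" s m] by (simp add: power_mult)
    hence "\<kappa> \<le> real m * c * (A * s^m)"
      using \<open>c > 0\<close> \<open>\<delta> > 0\<close> p unfolding A \<kappa>_def by (simp add: field_simps)
    moreover have "\<kappa> * s^p \<le> \<kappa>"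
      using \<open>0 \<le> s\<close> \<open>s \<le> 1\<close> by (simp add: \<kappa>_def power_le_one mult_left_le)
    moreover have "\<kappa> * (A * s^m) \<le> real m * c * (A * s^m)"
      using mc \<open>0 \<le> A * s^m\<close> unfolding \<kappa>_def by (rule mult_right_mono)
    moreover have "2 * (real m * c * (A * s^m)) \<le> A * (2 * real m * (s^(m-1) * w))"
    proof -
      have "2 * (real m * c * (A * s^m)) = A * (2 * real m * (s^(m-1) * (c * s)))"
        using power_pred[of m] p by (simp add: algebra_simps)
      also have "\<dots> \<le> A * (2 * real m * (s^(m-1) * w))"
        using glob \<open>A \<ge> 0\<close> \<open>0 \<le> s\<close> by (intro mult_left_mono) auto
      finally show ?thesis .
    qed
    moreover have "0 \<le> 2 * real p * (s^(p-1) * w)" using \<open>0 \<le> s\<close> \<open>w \<ge> 0\<close> by simp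
    ultimately show "\<kappa> * s^p + \<kappa> * (A * s^m) \<le> 2 * real p * (s^(p-1) * w) + A * (2 * real m * (s^(m-1) * w))"
      by linarith
  qed
qed

lemma lyapunov_deriv_drift_ge:
  fixes x F c \<delta> A :: real
  assumes x: "x \<in> {0..1}" and "c > 0" "\<delta> > 0"
    and glob: "c * (x - 1/2)^2 \<le> (x - 1/2) * (x - F)"
    and near: "\<bar>x - 1/2\<bar> < \<delta> \<Longrightarrow> 3/4 * (x - 1/2)^2 \<le> (x - 1/2) * (x - F)"
    and p: "1 \<le> p" "p \<le> m" and mc: "3 * real p / 2 \<le> real m * c"
    and A: "A = (3 * real p / 2) / (real m * c * \<delta>^(2*m))"
  shows "(3 * real p / 2) * lyapunov p m A x
    \<le> real (2*p) * (x - 1/2)^(2*p-1) * (x - F) + A * (real (2*m) * (x - 1/2)^(2*m-1) * (x - F))"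
proof -
  define u where "u = x - 1/2"
  have odd_power: "real (2*k) * u^(2*k-1) * (x - F) = 2 * real k * ((u^2)^(k-1) * (u * (x - F)))"
    if "k \<ge> 1" for k
  proof -
    have "2*k-1 = Suc (2*(k-1))" using that by simp
    thus ?thesis by (simp add: power_mult)
  qed
  have "(3 * real p / 2) * ((u^2)^p + A * (u^2)^m)
      \<le> 2 * real p * ((u^2)^(p-1) * (u * (x - F))) + A * (2 * real m * ((u^2)^(m-1) * (u * (x - F))))"
  proof (rule lyapunov_drift_ge[OF _ _ \<open>c > 0\<close> \<open>\<delta> > 0\<close> _ _ p mc A])
    have "\<bar>u\<bar> \<le> 1" using x by (simp add: u_def abs_if)
    thus "u^2 \<le> 1" by (simp add: abs_square_le_1)
    show "c * u^2 \<le> u * (x - F)" using glob by (simp add: u_def)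
    assume "u^2 < \<delta>^2"
    hence "\<bar>u\<bar> < \<delta>" using power2_less_imp_less[of "\<bar>u\<bar>" \<delta>] \<open>\<delta> > 0\<close> by simp
    thus "3/4 * u^2 \<le> u * (x - F)" using near by (simp add: u_def)
  qed simp
  thus ?thesis
    unfolding lyapunov_def u_def[symmetric] odd_power[OF p(1)] odd_power[OF order_trans[OF p]] power_mult .
qed

lemma lyapunov_step_le:
  fixes x F N c \<delta> A :: real
  assumes x: "x \<in> {0..1}" and N: "N \<ge> 1" and F: "0 \<le> F" "F \<le> 1"
    and "c > 0" "\<delta> > 0"
    and glob: "c * (x - 1/2)^2 \<le> (x - 1/2) * (x - F)"
    and near: "\<bar>x - 1/2\<bar> < \<delta> \<Longrightarrow> 3/4 * (x - 1/2)^2 \<le> (x - 1/2) * (x - F)"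
    and p: "1 \<le> p" "p \<le> m" and mc: "3 * real p / 2 \<le> real m * c"
    and A: "A = (3 * real p / 2) / (real m * c * \<delta>^(2*m))"
  shows "F * lyapunov p m A (x + (1-x)/N) + (1-F) * lyapunov p m A (x - x/N)
    \<le> (1 - (3 * real p / 2) / N) * lyapunov p m A x + lyapunov_remainder p m A N x / N^2"
proof -
  define u where "u = x - 1/2"
  have "A \<ge> 0" using A \<open>c > 0\<close> \<open>\<delta> > 0\<close> by simp
  have "N > 0" using N by simp
  have coeff: "real (2*k) * (real (2*k) - 1) / 2 = real k * (2 * real k - 1)" for k
    by (simp add: field_simps)
  have step: "F * (x + (1-x)/N - 1/2)^(2*k) + (1-F) * (x - x/N - 1/2)^(2*k)
     \<le> u^(2*k) - real (2*k) * u^(2*k-1) * (x-F) / N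
        + real k * (2 * real k - 1) * (\<bar>u\<bar> + 1/N)^(2*k-2) / N^2" for k
    using binary_step_power_le[OF x N F, of "2*k"] unfolding coeff u_def by simp
  have "F * lyapunov p m A (x + (1-x)/N) + (1-F) * lyapunov p m A (x - x/N)
      = (F * (x + (1-x)/N - 1/2)^(2*p) + (1-F) * (x - x/N - 1/2)^(2*p))
        + A * (F * (x + (1-x)/N - 1/2)^(2*m) + (1-F) * (x - x/N - 1/2)^(2*m))"
    unfolding lyapunov_def by (simp add: algebra_simps)
  also have "\<dots> \<le> (u^(2*p) - real (2*p) * u^(2*p-1) * (x-F) / N
        + real p * (2 * real p - 1) * (\<bar>u\<bar> + 1/N)^(2*p-2) / N^2)
      + A * (u^(2*m) - real (2*m) * u^(2*m-1) * (x-F) / N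
        + real m * (2 * real m - 1) * (\<bar>u\<bar> + 1/N)^(2*m-2) / N^2)"
    by (rule add_mono[OF step mult_left_mono[OF step \<open>A \<ge> 0\<close>]])
  also have "\<dots> = lyapunov p m A x
      - (real (2*p) * u^(2*p-1) * (x-F) + A * (real (2*m) * u^(2*m-1) * (x-F))) / N
      + lyapunov_remainder p m A N x / N^2"
    unfolding lyapunov_def lyapunov_remainder_def u_def
    by (simp add: algebra_simps add_divide_distrib diff_divide_distrib)
  also have "\<dots> \<le> lyapunov p m A x - (3 * real p / 2) * lyapunov p m A x / N
      + lyapunov_remainder p m A N x / N^2"
    using divide_right_mono[OF lyapunov_deriv_drift_ge[OF x \<open>c > 0\<close> \<open>\<delta> > 0\<close> glob near p mc A], of N]
      \<open>N > 0\<close> unfolding u_def by linarith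
  also have "\<dots> = (1 - (3 * real p / 2) / N) * lyapunov p m A x + lyapunov_remainder p m A N x / N^2"
    by (simp add: algebra_simps add_divide_distrib)
  finally show ?thesis .
qed

lemma lyapunov_remainder_le:
  assumes x: "x \<in> {0..1}" and N: "N \<ge> 1" and p: "1 \<le> p" "p \<le> m" and "A \<ge> 0"
  shows "lyapunov_remainder p m A N x
    \<le> (real p * (2 * real p - 1) + A * (real m * (2 * real m - 1)) * 2^(2*m-2*p))
       * (\<bar>x - 1/2\<bar> + 1/N)^(2*p-2)"
proof -
  define b where "b = \<bar>x - 1/2\<bar> + 1/N"
  have "1/N \<le> 1" "\<bar>x - 1/2\<bar> \<le> 1/2" using N x by (simp_all add: abs_if)
  hence "b \<le> 2" unfolding b_def by linarith
  moreover have "0 \<le> b" using N by (simp add: b_def)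
  ultimately have b: "0 \<le> b" "b \<le> 2" by simp_all
  have "b^(2*m-2) = b^(2*p-2) * b^(2*m-2*p)"
    using p by (simp flip: power_add)
  also have "\<dots> \<le> b^(2*p-2) * 2^(2*m-2*p)"
    using b by (intro mult_left_mono power_mono) auto
  finally have "A * (real m * (2 * real m - 1)) * b^(2*m-2)
      \<le> A * (real m * (2 * real m - 1)) * (b^(2*p-2) * 2^(2*m-2*p))"
    using \<open>A \<ge> 0\<close> p by (intro mult_left_mono) auto
  thus ?thesis unfolding lyapunov_remainder_def b_def[symmetric] by (simp add: algebra_simps)
qed

lemma one_minus_div_mul_power_le:
  fixes N :: real assumes "N > 0"
  shows "(1 - real q / N) * (N + 1)^q \<le> N^q"
proof -
  have "1 - real q / N \<le> 1 - real q / (N + 1)"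
    using assms by (intro diff_left_mono divide_left_mono) auto
  also have "\<dots> = 1 + real q * (- 1 / (N + 1))" by simp
  also have "\<dots> \<le> (1 + (- 1 / (N + 1)))^q"
    by (rule Bernoulli_inequality) (use assms in \<open>simp add: divide_simps\<close>)
  also have "\<dots> = N^q / (N + 1)^q"
    using assms by (simp add: field_simps power_divide)
  finally show ?thesis using assms by (simp add: divide_simps)
qed

lemma power_bound_step:
  fixes N \<kappa> K C x y :: real
  assumes "N \<ge> 1" "\<kappa> < N" "K \<le> (\<kappa> - real q) * C" "0 \<le> C"
    and x: "x \<le> C / N^q" and y: "y \<le> (1 - \<kappa>/N) * x + K / N^(Suc q)"
  shows "y \<le> C / (N + 1)^q"
proof -
  have "0 \<le> 1 - \<kappa>/N" using assms(1,2) by (simp add: divide_simps)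
  have "y \<le> (1 - \<kappa>/N) * (C / N^q) + K / N^(Suc q)"
    using y mult_left_mono[OF x \<open>0 \<le> 1 - \<kappa>/N\<close>] by linarith
  also have "\<dots> = C / N^q - (\<kappa> * C - K) / N^(Suc q)"
    using assms(1) by (simp add: field_simps)
  also have "\<dots> \<le> C / N^q - (real q * C) / N^(Suc q)"
    using assms(1,3) by (intro diff_left_mono divide_right_mono) (auto simp: algebra_simps)
  also have "\<dots> = (1 - real q / N) * (N+1)^q * (C / ((N+1)^q * N^q))"
    using assms(1) by (simp add: field_simps)
  also have "\<dots> \<le> N^q * (C / ((N+1)^q * N^q))"
    using one_minus_div_mul_power_le[of N q] assms(1,4) by (intro mult_right_mono) auto
  also have "\<dots> = C / (N+1)^q" using assms(1) by (simp add: field_simps)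
  finally show ?thesis .
qed

lemma decay_of_recursive_bound:
  fixes X :: "nat \<Rightarrow> real" and N0 \<kappa> K B :: real and q :: nat
  assumes N0: "N0 \<ge> 1" and \<kappa>: "\<kappa> > real q"
    and X0: "\<And>n. 0 \<le> X n" and XB: "\<And>n. X n \<le> B"
    and rec: "\<And>n. X (Suc n) \<le> (1 - \<kappa>/(N0 + real n)) * X n + K / (N0 + real n)^(Suc q)"
  shows "\<exists>C. \<forall>n. X n \<le> C / (N0 + real n)^q"
proof -
  have "B \<ge> 0" using X0[of 0] XB[of 0] by linarith
  define C where "C = max (K / (\<kappa> - q)) (B * (N0 + \<kappa> + 1)^q)"
  have "K \<le> (\<kappa> - q) * C" using \<kappa> unfolding C_def
    by (metis diff_gt_0_iff_gt max.cobounded1 mult.commute pos_divide_le_eq)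
  have "B * (N0 + \<kappa> + 1)^q \<le> C" unfolding C_def by simp
  hence "0 \<le> C" using \<open>B \<ge> 0\<close> N0 \<kappa> by (smt (verit) of_nat_0_le_iff zero_le_mult_iff zero_le_power)
  have initial: "B \<le> C / M^q" if "M > 0" "M \<le> N0 + \<kappa> + 1" for M :: real
  proof -
    have "B * M^q \<le> B * (N0 + \<kappa> + 1)^q"
      using that \<open>B \<ge> 0\<close> by (intro mult_left_mono power_mono) auto
    thus ?thesis using that \<open>B * (N0 + \<kappa> + 1)^q \<le> C\<close> by (simp add: divide_simps)
  qed
  have "X n \<le> C / (N0 + real n)^q" for n
  proof (induction n)
    case 0 show ?case using initial[of N0] XB[of 0] N0 \<kappa> by simp
  next
    case (Suc n)
    have N: "N0 + real (Suc n) = (N0 + real n) + 1" "N0 + real n \<ge> 1" using N0 by simp_all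
    show ?case
    proof (cases "N0 + real n \<le> \<kappa>")
      case True
      thus ?thesis using initial[of "N0 + real (Suc n)"] XB[of "Suc n"] N0 by simp
    next
      case False
      thus ?thesis unfolding N(1)
        by (intro power_bound_step[OF N(2) _ \<open>K \<le> _\<close> \<open>0 \<le> C\<close> Suc.IH rec]) simp
    qed
  qed
  thus ?thesis by blast
qed

lemma urn_up_in_unit:
  assumes "s \<in> {0..1}" "0 < L" shows "urn_up s L \<in> {0..1}"
  using assms by (simp add: urn_up_def divide_simps mult_left_le)

lemma urn_down_in_unit:
  assumes "s \<in> {0..1}" "0 < L" shows "urn_down s L \<in> {0..1}"
proof -
  have "L * s \<le> L" using assms by (simp add: mult_left_le)
  hence "L * s \<le> L + 1" by linarith
  moreover have "0 \<le> L * s" using assms by simp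
  ultimately show ?thesis using assms by (simp add: urn_down_def divide_simps)
qed

locale urn_chain = prob_space M
  for M :: "'a measure" +
  fixes f :: "real \<Rightarrow> real" and \<alpha> l :: "nat \<Rightarrow> 'a \<Rightarrow> real" and a0 l0 :: real
  assumes measurable_alpha: "\<And>n. \<alpha> n \<in> borel_measurable M"
    and a0: "a0 \<in> {0..1}" and l0: "0 < l0"
    and init: "\<And>\<omega>. \<omega> \<in> space M \<Longrightarrow> \<alpha> 0 \<omega> = a0 \<and> l 0 \<omega> = l0"
    and l_Suc: "\<And>n \<omega>. \<omega> \<in> space M \<Longrightarrow> l (Suc n) \<omega> = l n \<omega> + 1"
    and alpha_Suc: "\<And>n \<omega>. \<omega> \<in> space M \<Longrightarrow>
      \<alpha> (Suc n) \<omega> = urn_up (\<alpha> n \<omega>) (l n \<omega>) \<or> \<alpha> (Suc n) \<omega> = urn_down (\<alpha> n \<omega>) (l n \<omega>)"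
    and markov: "\<And>n (B :: nat \<Rightarrow> real set). (\<forall>i. B i \<in> sets borel) \<Longrightarrow>
        measure M {\<omega> \<in> space M. (\<forall>i\<le>n. \<alpha> i \<omega> \<in> B i) \<and>
                                 \<alpha> (Suc n) \<omega> = urn_up (\<alpha> n \<omega>) (l n \<omega>)}
        = (\<integral>\<omega>. indicator {\<omega> \<in> space M. \<forall>i\<le>n. \<alpha> i \<omega> \<in> B i} \<omega> * f (\<alpha> n \<omega>) \<partial>M)"

lemma urn_process_imp_urn_chain:
  assumes "urn_process M f \<alpha> l"
  obtains a0 l0 where "urn_chain M f \<alpha> l a0 l0"
proof -
  note process = assms[unfolded urn_process_def]
  then obtain a0 l0 where "a0 \<in> {0..1}" "0 < l0" "\<forall>\<omega>\<in>space M. \<alpha> 0 \<omega> = a0 \<and> l 0 \<omega> = l0"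
    by auto
  show thesis
  proof (rule that, intro urn_chain.intro urn_chain_axioms.intro)
    show "prob_space M" using process by blast
  qed (use process \<open>a0 \<in> {0..1}\<close> \<open>0 < l0\<close> \<open>\<forall>\<omega>\<in>space M. _\<close> in blast)+
qed

context urn_chain
begin

definition len :: "nat \<Rightarrow> real" where "len n = l0 + real n"

lemma len_pos: "len n > 0" using l0 by (simp add: len_def)

lemma l_eq_len: "\<omega> \<in> space M \<Longrightarrow> l n \<omega> = len n"
  by (induction n) (auto simp: init l_Suc len_def)

text \<open>The values \<open>\<alpha>\<^sub>n\<close> can take form a finite set, so every function of \<open>\<alpha>\<^sub>n\<close> is a simple
  random variable; this gives measurability and integrability for free.\<close>
fun support :: "nat \<Rightarrow> real set" where
  "support 0 = {a0}"
| "support (Suc n) = (\<lambda>s. urn_up s (len n)) ` support n \<union> (\<lambda>s. urn_down s (len n)) ` support n"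

lemma finite_support: "finite (support n)" by (induction n) auto

lemma support_subset: "support n \<subseteq> {0..1}"
  by (induction n) (use a0 urn_up_in_unit urn_down_in_unit len_pos in auto)

lemma alpha_in_support: "\<omega> \<in> space M \<Longrightarrow> \<alpha> n \<omega> \<in> support n"
proof (induction n)
  case 0 then show ?case using init by simp
next
  case (Suc n)
  then show ?case using alpha_Suc[OF Suc.prems, of n] l_eq_len[OF Suc.prems, of n] by auto
qed

lemma alpha_in_unit: "\<omega> \<in> space M \<Longrightarrow> \<alpha> n \<omega> \<in> {0..1}"
  using alpha_in_support support_subset by blast

definition level_set :: "nat \<Rightarrow> real \<Rightarrow> 'a set" where
  "level_set n s = {\<omega> \<in> space M. \<alpha> n \<omega> = s}"

lemma sets_level_set: "level_set n s \<in> sets M"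
  unfolding level_set_def using measurable_alpha[of n] by measurable

lemma fun_alpha_eq_sum:
  fixes h :: "real \<Rightarrow> real"
  assumes "\<omega> \<in> space M"
  shows "h (\<alpha> n \<omega>) = (\<Sum>s\<in>support n. h s * indicator (level_set n s) \<omega>)"
proof -
  have "(\<Sum>s\<in>support n. h s * indicator (level_set n s) \<omega>) = (\<Sum>s\<in>support n. if s = \<alpha> n \<omega> then h s else 0)"
    by (intro sum.cong) (auto simp: level_set_def assms indicator_def)
  also have "\<dots> = h (\<alpha> n \<omega>)" using alpha_in_support[OF assms] finite_support by simp
  finally show ?thesis by simp
qed

lemma borel_measurable_fun_alpha:
  fixes h :: "real \<Rightarrow> real" shows "(\<lambda>\<omega>. h (\<alpha> n \<omega>)) \<in> borel_measurable M"
proof -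
  have "(\<lambda>\<omega>. \<Sum>s\<in>support n. h s * indicator (level_set n s) \<omega>) \<in> borel_measurable M"
    using sets_level_set by (intro borel_measurable_sum borel_measurable_times borel_measurable_const borel_measurable_indicator)
  thus ?thesis by (rule measurable_cong[THEN iffD1, rotated]) (simp add: fun_alpha_eq_sum)
qed

lemma integrable_fun_alpha:
  fixes h :: "real \<Rightarrow> real" shows "integrable M (\<lambda>\<omega>. h (\<alpha> n \<omega>))"
proof -
  have "integrable M (\<lambda>\<omega>. \<Sum>s\<in>support n. h s * indicator (level_set n s) \<omega>)"
    using sets_level_set
    by (intro Bochner_Integration.integrable_sum integrable_mult_right integrable_real_indicator)
       (auto simp: less_top[symmetric])
  thus ?thesis
    by (rule Bochner_Integration.integrable_cong[OF refl, THEN iffD1, rotated]) (simp add: fun_alpha_eq_sum[of _ h n])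
qed

definition up_event :: "nat \<Rightarrow> 'a set" where
  "up_event n = {\<omega> \<in> space M. \<alpha> (Suc n) \<omega> = urn_up (\<alpha> n \<omega>) (len n)}"

lemma sets_up_event: "up_event n \<in> sets M"
  unfolding up_event_def urn_up_def using measurable_alpha[of n] measurable_alpha[of "Suc n"] by measurable

lemma fun_alpha_indicator_up_event_eq_sum:
  fixes h :: "real \<Rightarrow> real"
  assumes "\<omega> \<in> space M"
  shows "h (\<alpha> n \<omega>) * indicator (up_event n) \<omega> = (\<Sum>s\<in>support n. h s * indicator (level_set n s \<inter> up_event n) \<omega>)"
  using fun_alpha_eq_sum[OF assms, of h n] by (simp add: sum_distrib_right indicator_inter_arith mult.assoc)

lemma integrable_fun_alpha_up_event:
  fixes h :: "real \<Rightarrow> real" shows "integrable M (\<lambda>\<omega>. h (\<alpha> n \<omega>) * indicator (up_event n) \<omega>)"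
proof -
  have "integrable M (\<lambda>\<omega>. \<Sum>s\<in>support n. h s * indicator (level_set n s \<inter> up_event n) \<omega>)"
    using sets_level_set sets_up_event
    by (intro Bochner_Integration.integrable_sum integrable_mult_right integrable_real_indicator)
       (auto simp: less_top[symmetric])
  thus ?thesis
    by (rule Bochner_Integration.integrable_cong[OF refl, THEN iffD1, rotated])
       (simp add: fun_alpha_indicator_up_event_eq_sum)
qed

lemma measure_level_set_up_event:
  "measure M (level_set n s \<inter> up_event n) = f s * measure M (level_set n s)"
proof -
  define B where "B = (\<lambda>i::nat. if i = n then {s} else (UNIV :: real set))"
  have B: "\<forall>i. B i \<in> sets borel" by (simp add: B_def)
  have e1: "{\<omega> \<in> space M. (\<forall>i\<le>n. \<alpha> i \<omega> \<in> B i) \<and> \<alpha> (Suc n) \<omega> = urn_up (\<alpha> n \<omega>) (l n \<omega>)}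
      = level_set n s \<inter> up_event n"
    by (auto simp: B_def level_set_def up_event_def l_eq_len)
  have e2: "{\<omega> \<in> space M. \<forall>i\<le>n. \<alpha> i \<omega> \<in> B i} = level_set n s"
    by (auto simp: B_def level_set_def)
  have "measure M (level_set n s \<inter> up_event n) = (\<integral>\<omega>. indicator (level_set n s) \<omega> * f (\<alpha> n \<omega>) \<partial>M)"
    using markov[where B=B and n=n, OF B] unfolding e1 e2 .
  also have "\<dots> = (\<integral>\<omega>. f s * indicator (level_set n s) \<omega> \<partial>M)"
    by (intro Bochner_Integration.integral_cong) (auto simp: indicator_def level_set_def)
  also have "\<dots> = f s * measure M (level_set n s)" using sets_level_set[of n s] by simp
  finally show ?thesis .
qed

lemma integral_fun_alpha_up_event:
  fixes h :: "real \<Rightarrow> real"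
  shows "(\<integral>\<omega>. h (\<alpha> n \<omega>) * indicator (up_event n) \<omega> \<partial>M) = (\<integral>\<omega>. h (\<alpha> n \<omega>) * f (\<alpha> n \<omega>) \<partial>M)"
proof -
  have "(\<integral>\<omega>. h (\<alpha> n \<omega>) * indicator (up_event n) \<omega> \<partial>M)
      = (\<integral>\<omega>. (\<Sum>s\<in>support n. h s * indicator (level_set n s \<inter> up_event n) \<omega>) \<partial>M)"
    by (intro Bochner_Integration.integral_cong refl) (simp add: fun_alpha_indicator_up_event_eq_sum)
  also have "\<dots> = (\<Sum>s\<in>support n. h s * measure M (level_set n s \<inter> up_event n))"
    using sets_level_set sets_up_event
    by (subst Bochner_Integration.integral_sum)
       (auto intro!: integrable_real_indicator simp: Int_absorb2 sets.sets_into_space less_top[symmetric])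
  also have "\<dots> = (\<Sum>s\<in>support n. (h s * f s) * measure M (level_set n s))"
    by (simp add: measure_level_set_up_event mult.assoc)
  also have "\<dots> = (\<integral>\<omega>. (\<Sum>s\<in>support n. (h s * f s) * indicator (level_set n s) \<omega>) \<partial>M)"
    using sets_level_set
    by (subst Bochner_Integration.integral_sum) (auto intro!: integrable_real_indicator simp: less_top[symmetric])
  also have "\<dots> = (\<integral>\<omega>. h (\<alpha> n \<omega>) * f (\<alpha> n \<omega>) \<partial>M)"
    by (intro Bochner_Integration.integral_cong refl) (simp add: fun_alpha_eq_sum[of _ "\<lambda>x. h x * f x" n])
  finally show ?thesis .
qed

lemma alpha_Suc_down:
  "\<omega> \<in> space M \<Longrightarrow> \<omega> \<notin> up_event n \<Longrightarrow> \<alpha> (Suc n) \<omega> = urn_down (\<alpha> n \<omega>) (len n)"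
  using alpha_Suc[of \<omega> n] l_eq_len[of \<omega> n] unfolding up_event_def by auto

lemma integral_fun_alpha_Suc:
  fixes g :: "real \<Rightarrow> real"
  shows "(\<integral>\<omega>. g (\<alpha> (Suc n) \<omega>) \<partial>M) = (\<integral>\<omega>. f (\<alpha> n \<omega>) * g (urn_up (\<alpha> n \<omega>) (len n))
           + (1 - f (\<alpha> n \<omega>)) * g (urn_down (\<alpha> n \<omega>) (len n)) \<partial>M)"
proof -
  define G where "G x = g (urn_up x (len n)) - g (urn_down x (len n))" for x
  have "g (\<alpha> (Suc n) \<omega>) = g (urn_down (\<alpha> n \<omega>) (len n)) + G (\<alpha> n \<omega>) * indicator (up_event n) \<omega>"
    if "\<omega> \<in> space M" for \<omega>
    using alpha_Suc_down[OF that] by (cases "\<omega> \<in> up_event n") (auto simp: G_def up_event_def)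
  hence "(\<integral>\<omega>. g (\<alpha> (Suc n) \<omega>) \<partial>M)
      = (\<integral>\<omega>. g (urn_down (\<alpha> n \<omega>) (len n)) \<partial>M) + (\<integral>\<omega>. G (\<alpha> n \<omega>) * indicator (up_event n) \<omega> \<partial>M)"
    using integrable_fun_alpha integrable_fun_alpha_up_event
    by (subst Bochner_Integration.integral_add[symmetric]) (auto intro: Bochner_Integration.integral_cong)
  also have "\<dots> = (\<integral>\<omega>. g (urn_down (\<alpha> n \<omega>) (len n)) \<partial>M) + (\<integral>\<omega>. G (\<alpha> n \<omega>) * f (\<alpha> n \<omega>) \<partial>M)"
    by (simp only: integral_fun_alpha_up_event)
  also have "\<dots> = (\<integral>\<omega>. f (\<alpha> n \<omega>) * g (urn_up (\<alpha> n \<omega>) (len n))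
      + (1 - f (\<alpha> n \<omega>)) * g (urn_down (\<alpha> n \<omega>) (len n)) \<partial>M)"
    using integrable_fun_alpha
    by (subst Bochner_Integration.integral_add[symmetric]) (auto intro: Bochner_Integration.integral_cong simp: G_def algebra_simps)
  finally show ?thesis .
qed

definition expect :: "nat \<Rightarrow> (real \<Rightarrow> real) \<Rightarrow> real" where
  "expect n g = (\<integral>\<omega>. g (\<alpha> n \<omega>) \<partial>M)"

lemma expect_mono: "(\<And>x. x \<in> {0..1} \<Longrightarrow> g x \<le> h x) \<Longrightarrow> expect n g \<le> expect n h"
  unfolding expect_def using alpha_in_unit by (intro integral_mono integrable_fun_alpha) auto

lemma expect_linear: "expect n (\<lambda>x. a * g x + b * h x) = a * expect n g + b * expect n h"
  unfolding expect_def using integrable_fun_alpha[of g n] integrable_fun_alpha[of h n] by simp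

lemma expect_const: "expect n (\<lambda>x. a) = a"
  unfolding expect_def by (simp add: prob_space)

lemma expect_nonneg: "(\<And>x. x \<in> {0..1} \<Longrightarrow> 0 \<le> g x) \<Longrightarrow> 0 \<le> expect n g"
  using expect_mono[of "\<lambda>x. 0" g n] expect_const[of n 0] by simp

lemma expect_Suc:
  "expect (Suc n) g = expect n (\<lambda>x. f x * g (x + (1-x)/(len n + 1)) + (1 - f x) * g (x - x/(len n + 1)))"
proof -
  have "urn_up x (len n) = x + (1-x)/(len n + 1)" "urn_down x (len n) = x - x/(len n + 1)" for x
    using len_pos[of n] unfolding urn_up_def urn_down_def by (simp_all add: field_simps)
  thus ?thesis unfolding expect_def integral_fun_alpha_Suc by simp
qed

lemma nn_integral_fun_alpha:
  "(\<And>x. x \<in> {0..1} \<Longrightarrow> 0 \<le> g x) \<Longrightarrow> (\<integral>\<^sup>+\<omega>. ennreal (g (\<alpha> n \<omega>)) \<partial>M) = ennreal (expect n g)"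
  unfolding expect_def using alpha_in_unit
  by (intro nn_integral_eq_integral integrable_fun_alpha) (auto intro!: AE_I2)

end

lemma abs_cube_le:
  fixes u s :: real assumes "s > 0"
  shows "\<bar>u\<bar>^3 \<le> s * u^4 + u^2 / s"
proof -
  have "0 \<le> (s * u^2 - \<bar>u\<bar>)^2 / s" using assms by simp
  also have "(s * u^2 - \<bar>u\<bar>)^2 / s = s * u^4 - 2 * \<bar>u\<bar>^3 + u^2 / s"
    using assms by (simp add: field_simps power2_eq_square power3_eq_cube)
       (simp add: algebra_simps abs_mult_self_eq power2_eq_square[symmetric] power4_eq_xxxx)
  finally have "2 * \<bar>u\<bar>^3 \<le> s * u^4 + u^2 / s" by simp
  moreover have "0 \<le> \<bar>u\<bar>^3" by simp
  ultimately show ?thesis by linarith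
qed

lemma summable_shifted_powr_three_halves:
  fixes N0 :: real assumes "N0 \<ge> 1"
  shows "summable (\<lambda>n. (N0 + real n) powr (-3/2))"
proof (rule summable_comparison_test')
  show "summable (\<lambda>n. real (Suc n) powr (-3/2))"
    using summable_Suc_iff[of "\<lambda>n. real n powr (-3/2)"] summable_real_powr_iff[of "-3/2"] by simp
  show "norm ((N0 + real n) powr (-3/2)) \<le> real (Suc n) powr (-3/2)" for n
    using assms by (auto intro!: powr_mono2')
qed

locale urn_drift = urn_chain +
  fixes c \<delta> :: real
  assumes f_unit: "\<And>x. x \<in> {0..1} \<Longrightarrow> f x \<in> {0..1}"
    and c_pos: "c > 0" and delta_pos: "\<delta> > 0"
    and drift_global: "\<And>x. x \<in> {0..1} \<Longrightarrow> c * (x - 1/2)^2 \<le> (x - 1/2) * (x - f x)"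
    and drift_near: "\<And>x. x \<in> {0..1} \<Longrightarrow> \<bar>x - 1/2\<bar> < \<delta> \<Longrightarrow>
      3/4 * (x - 1/2)^2 \<le> (x - 1/2) * (x - f x)"
begin

lemma expect_lyapunov_Suc_le:
  assumes p: "1 \<le> p" "p \<le> m" and mc: "3 * real p / 2 \<le> real m * c"
    and A: "A = (3 * real p / 2) / (real m * c * \<delta>^(2*m))"
  shows "expect (Suc n) (lyapunov p m A)
    \<le> (1 - (3 * real p / 2) / (len n + 1)) * expect n (lyapunov p m A)
      + expect n (lyapunov_remainder p m A (len n + 1)) / (len n + 1)^2"
proof -
  define N where "N = len n + 1"
  have "N \<ge> 1" using len_pos[of n] by (simp add: N_def)
  have "expect (Suc n) (lyapunov p m A)
      = expect n (\<lambda>x. f x * lyapunov p m A (x + (1-x)/N) + (1 - f x) * lyapunov p m A (x - x/N))"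
    unfolding expect_Suc N_def ..
  also have "\<dots> \<le> expect n (\<lambda>x. (1 - (3 * real p / 2) / N) * lyapunov p m A x
      + (1 / N^2) * lyapunov_remainder p m A N x)"
  proof (rule expect_mono)
    fix x :: real assume x: "x \<in> {0..1}"
    show "f x * lyapunov p m A (x + (1-x)/N) + (1 - f x) * lyapunov p m A (x - x/N)
      \<le> (1 - (3 * real p / 2) / N) * lyapunov p m A x + (1 / N^2) * lyapunov_remainder p m A N x"
      using lyapunov_step_le[OF x \<open>N \<ge> 1\<close> _ _ c_pos delta_pos drift_global[OF x] drift_near[OF x] p mc A]
        f_unit[OF x] by simp
  qed
  also have "\<dots> = (1 - (3 * real p / 2) / N) * expect n (lyapunov p m A)
      + expect n (lyapunov_remainder p m A N) / N^2"
    unfolding expect_linear by simp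
  finally show ?thesis unfolding N_def .
qed

lemma moment_decay:
  assumes p: "1 \<le> p"
    and remainder: "\<And>n. expect n (\<lambda>x. (\<bar>x - 1/2\<bar> + 1/(len n + 1))^(2*p-2)) \<le> K / (len n + 1)^(p-1)"
  shows "\<exists>C. \<forall>n. expect n (\<lambda>x. (x - 1/2)^(2*p)) \<le> C / (len n + 1)^p"
proof -
  define m where "m = p + nat \<lceil>3 * real p / (2 * c)\<rceil>"
  define A where "A = (3 * real p / 2) / (real m * c * \<delta>^(2*m))"
  define K' where "K' = real p * (2 * real p - 1) + A * (real m * (2 * real m - 1)) * 2^(2*m-2*p)"
  define N0 where "N0 = l0 + 1"
  have "p \<le> m" by (simp add: m_def)
  have "3 * real p / (2 * c) \<le> real m" unfolding m_def by linarith
  hence mc: "3 * real p / 2 \<le> real m * c" using c_pos by (simp add: field_simps)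
  have "A \<ge> 0" using c_pos delta_pos by (simp add: A_def)
  have "K' \<ge> 0" using p \<open>p \<le> m\<close> \<open>A \<ge> 0\<close> by (simp add: K'_def)
  have N: "len n + 1 = N0 + real n" "len n + 1 \<ge> 1" for n
    using len_pos[of n] by (simp_all add: len_def N0_def)
  have "\<exists>C. \<forall>n. expect n (lyapunov p m A) \<le> C / (N0 + real n)^p"
  proof (rule decay_of_recursive_bound[where \<kappa> = "3 * real p / 2" and K = "K' * K" and B = "1 + A"])
    show "N0 \<ge> 1" "real p < 3 * real p / 2" using l0 p by (simp_all add: N0_def)
    show "0 \<le> expect n (lyapunov p m A)" "expect n (lyapunov p m A) \<le> 1 + A" for n
      using expect_nonneg[of "lyapunov p m A" n] expect_mono[of "lyapunov p m A" "\<lambda>x. 1 + A" n]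
        lyapunov_nonneg[OF \<open>A \<ge> 0\<close>] lyapunov_le[OF \<open>A \<ge> 0\<close>] expect_const by auto
    fix n
    define N where "N = len n + 1"
    have "expect n (lyapunov_remainder p m A N)
        \<le> expect n (\<lambda>x. K' * (\<bar>x - 1/2\<bar> + 1/N)^(2*p-2))"
      using lyapunov_remainder_le[OF _ N(2) p \<open>p \<le> m\<close> \<open>A \<ge> 0\<close>]
      by (intro expect_mono) (simp add: K'_def N_def)
    also have "\<dots> = K' * expect n (\<lambda>x. (\<bar>x - 1/2\<bar> + 1/N)^(2*p-2))"
      using expect_linear[of n K' _ 0] by simp
    also have "\<dots> \<le> K' * (K / N^(p-1))"
      using remainder[of n] \<open>K' \<ge> 0\<close> by (intro mult_left_mono) (simp_all add: N_def)
    finally have "expect n (lyapunov_remainder p m A N) / N^2 \<le> K' * (K / N^(p-1)) / N^2"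
      by (rule divide_right_mono) simp
    also have "N^(Suc p) = N^(p-1) * N^2" using p by (simp flip: power_add)
    hence "K' * (K / N^(p-1)) / N^2 = K' * K / N^(Suc p)" by simp
    finally have "expect n (lyapunov_remainder p m A N) / N^2 \<le> K' * K / N^(Suc p)" .
    with expect_lyapunov_Suc_le[OF p \<open>p \<le> m\<close> mc A_def, of n]
    show "expect (Suc n) (lyapunov p m A)
        \<le> (1 - 3 * real p / 2 / (N0 + real n)) * expect n (lyapunov p m A) + K' * K / (N0 + real n)^(Suc p)"
      unfolding N_def N(1) by linarith
  qed
  then obtain C where "\<forall>n. expect n (lyapunov p m A) \<le> C / (N0 + real n)^p" ..
  moreover have "expect n (\<lambda>x. (x - 1/2)^(2*p)) \<le> expect n (lyapunov p m A)" for n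
    using lyapunov_ge_moment[OF \<open>A \<ge> 0\<close>] by (rule expect_mono)
  ultimately have "expect n (\<lambda>x. (x - 1/2)^(2*p)) \<le> C / (len n + 1)^p" for n
    unfolding N(1) by (meson order_trans)
  thus ?thesis by blast
qed

lemma second_moment_decay: "\<exists>C. \<forall>n. expect n (\<lambda>x. (x - 1/2)^2) \<le> C / (len n + 1)"
  using moment_decay[of 1 1] by (simp add: expect_const)

lemma fourth_moment_decay: "\<exists>C. \<forall>n. expect n (\<lambda>x. (x - 1/2)^4) \<le> C / (len n + 1)^2"
proof -
  obtain C where C: "\<And>n. expect n (\<lambda>x. (x - 1/2)^2) \<le> C / (len n + 1)"
    using second_moment_decay by blast
  have "expect n (\<lambda>x. (\<bar>x - 1/2\<bar> + 1/(len n + 1))^(2*2-2)) \<le> (2 * C + 2) / (len n + 1)^(2-1)" for n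
  proof -
    define N where "N = len n + 1"
    have "N \<ge> 1" using len_pos[of n] by (simp add: N_def)
    have "(\<bar>u\<bar> + 1/N)^2 \<le> 2 * u^2 + (2 / N^2) * 1" for u :: real
      using sum_squares_bound[of "\<bar>u\<bar>" "1/N"] by (simp add: power2_sum power_divide)
    hence "expect n (\<lambda>x. (\<bar>x - 1/2\<bar> + 1/N)^2) \<le> expect n (\<lambda>x. 2 * (x - 1/2)^2 + (2 / N^2) * 1)"
      by (intro expect_mono)
    also have "\<dots> = 2 * expect n (\<lambda>x. (x - 1/2)^2) + 2 / N^2"
      by (subst expect_linear) (simp add: expect_const)
    also have "\<dots> \<le> 2 * (C / N) + 2 / N"
    proof -
      have "2 / N^2 \<le> 2 / N" using \<open>N \<ge> 1\<close> by (simp add: divide_left_mono power2_eq_square)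
      thus ?thesis using C[of n] unfolding N_def by linarith
    qed
    finally show ?thesis by (simp add: N_def add_divide_distrib)
  qed
  from moment_decay[of 2 "2 * C + 2", OF _ this] show ?thesis by simp
qed

lemma third_abs_moment_decay:
  "\<exists>D \<ge> 0. \<forall>n. expect n (\<lambda>x. \<bar>x - 1/2\<bar>^3) \<le> D * (len n + 1) powr (-3/2)"
proof -
  obtain C2 where C2: "\<And>n. expect n (\<lambda>x. (x - 1/2)^2) \<le> C2 / (len n + 1)"
    using second_moment_decay by blast
  obtain C4 where C4: "\<And>n. expect n (\<lambda>x. (x - 1/2)^4) \<le> C4 / (len n + 1)^2"
    using fourth_moment_decay by blast
  have "expect n (\<lambda>x. \<bar>x - 1/2\<bar>^3) \<le> (C2 + C4) * (len n + 1) powr (-3/2)" for n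
  proof -
    define N where "N = len n + 1"
    have "N > 0" using len_pos[of n] by (simp add: N_def)
    define s where "s = sqrt N"
    have "s > 0" "s * s = N" using \<open>N > 0\<close> by (simp_all add: s_def)
    \<comment> \<open>the weight \<open>\<surd>N\<close> balances the second and the fourth moment\<close>
    have "expect n (\<lambda>x. \<bar>x - 1/2\<bar>^3) \<le> expect n (\<lambda>x. s * (x - 1/2)^4 + (1/s) * (x - 1/2)^2)"
      by (rule expect_mono) (use abs_cube_le[OF \<open>s > 0\<close>] in simp)
    also have "\<dots> = s * expect n (\<lambda>x. (x - 1/2)^4) + (1/s) * expect n (\<lambda>x. (x - 1/2)^2)"
      by (rule expect_linear)
    also have "\<dots> \<le> s * (C4 / N^2) + (1/s) * (C2 / N)"
      using C2[of n] C4[of n] \<open>s > 0\<close> unfolding N_def by (intro add_mono mult_left_mono) auto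
    also have "\<dots> = (C2 + C4) / (N * s)"
      using \<open>s > 0\<close> unfolding \<open>s * s = N\<close>[symmetric] by (simp add: field_simps power2_eq_square)
    also have "N * s = N powr (3/2)"
    proof -
      have "N powr (3/2) = N powr (1 + 1/2)" by simp
      also have "\<dots> = N powr 1 * N powr (1/2)" by (rule powr_add)
      finally have "N powr (3/2) = N powr 1 * N powr (1/2)" .
      thus ?thesis using \<open>N > 0\<close> by (simp add: s_def powr_half_sqrt)
    qed
    finally show ?thesis unfolding N_def by (simp add: powr_minus_divide)
  qed
  moreover have "(C2 + C4) * (len n + 1) powr (-3/2) \<le> max (C2 + C4) 0 * (len n + 1) powr (-3/2)" for n
    by (intro mult_right_mono) auto
  ultimately show ?thesis by (meson max.cobounded2 order_trans)
qed

lemma nn_integral_suminf_fun_alpha_less_top: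
  assumes g_nonneg: "\<And>x. x \<in> {0..1} \<Longrightarrow> 0 \<le> g x"
    and g_cubic: "\<And>x. x \<in> {0..1} \<Longrightarrow> g x \<le> K * \<bar>x - 1/2\<bar>^3"
  shows "(\<integral>\<^sup>+\<omega>. (\<Sum>k. ennreal (g (\<alpha> k \<omega>))) \<partial>M) < \<infinity>"
proof -
  obtain D where "D \<ge> 0" and D: "\<And>n. expect n (\<lambda>x. \<bar>x - 1/2\<bar>^3) \<le> D * (len n + 1) powr (-3/2)"
    using third_abs_moment_decay by blast
  have bound: "expect k g \<le> \<bar>K\<bar> * D * (len k + 1) powr (-3/2)" for k
  proof -
    have "expect k g \<le> expect k (\<lambda>x. \<bar>K\<bar> * \<bar>x - 1/2\<bar>^3)"
    proof (rule expect_mono)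
      fix x :: real assume "x \<in> {0..1}"
      have "K * \<bar>x - 1/2\<bar>^3 \<le> \<bar>K\<bar> * \<bar>x - 1/2\<bar>^3" by (intro mult_right_mono) auto
      thus "g x \<le> \<bar>K\<bar> * \<bar>x - 1/2\<bar>^3" using g_cubic[OF \<open>x \<in> {0..1}\<close>] by linarith
    qed
    also have "\<dots> = \<bar>K\<bar> * expect k (\<lambda>x. \<bar>x - 1/2\<bar>^3)"
      using expect_linear[of k "\<bar>K\<bar>" _ 0] by simp
    also have "\<dots> \<le> \<bar>K\<bar> * (D * (len k + 1) powr (-3/2))"
      using D[of k] by (intro mult_left_mono) simp_all
    finally show ?thesis by (simp add: mult.assoc)
  qed
  have "summable (\<lambda>k. (l0 + 1 + real k) powr (-3/2))"
    by (rule summable_shifted_powr_three_halves) (use l0 in simp)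
  hence summable_bound: "summable (\<lambda>k. \<bar>K\<bar> * D * (len k + 1) powr (-3/2))"
    by (intro summable_mult) (simp add: len_def add_ac)
  have "(\<integral>\<^sup>+\<omega>. (\<Sum>k. ennreal (g (\<alpha> k \<omega>))) \<partial>M) = (\<Sum>k. \<integral>\<^sup>+\<omega>. ennreal (g (\<alpha> k \<omega>)) \<partial>M)"
    by (intro nn_integral_suminf measurable_compose[OF borel_measurable_fun_alpha measurable_ennreal])
  also have "\<dots> = (\<Sum>k. ennreal (expect k g))"
    using nn_integral_fun_alpha[of g, OF g_nonneg] by simp
  also have "\<dots> \<le> (\<Sum>k. ennreal (\<bar>K\<bar> * D * (len k + 1) powr (-3/2)))"
    by (rule suminf_le, rule ennreal_leI, rule bound) auto
  also have "\<dots> < \<infinity>"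
  proof -
    have "(\<Sum>k. ennreal (\<bar>K\<bar> * D * (len k + 1) powr (-3/2))) \<noteq> top"
      by (rule ennreal_suminf_neq_top[OF summable_bound]) (simp add: \<open>D \<ge> 0\<close>)
    thus ?thesis by (simp add: less_top)
  qed
  finally show ?thesis .
qed

end

lemma urn_chain_imp_urn_drift:
  fixes f :: "real \<Rightarrow> real" and a B :: real
  assumes chain: "urn_chain M f \<alpha> l a0 l0"
    and f_range: "\<forall>x\<in>{0..1}. 0 < f x \<and> f x < 1" and cont: "continuous_on {0..1} f"
    and fix_unique: "\<forall>x\<in>{0..1}. f x = x \<longrightarrow> x = 1/2"
    and taylor: "\<And>x. x \<in> {0..1} \<Longrightarrow> \<bar>f x - 1/2 - a/2 * (x - 1/2)^2\<bar> \<le> B * \<bar>x - 1/2\<bar>^3"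
    and "B \<ge> 0"
  obtains c \<delta> where "urn_drift M f \<alpha> l a0 l0 c \<delta>"
proof -
  obtain \<delta> where "\<delta> > 0" and near:
    "\<And>x. x \<in> {0..1} \<Longrightarrow> \<bar>x - 1/2\<bar> < \<delta> \<Longrightarrow> 3/4 * (x - 1/2)^2 \<le> (x - 1/2) * (x - f x)"
    using drift_near_fixed_point[OF taylor \<open>B \<ge> 0\<close>] by blast
  obtain c where "c > 0" and global: "\<And>x. x \<in> {0..1} \<Longrightarrow> c * (x - 1/2)^2 \<le> (x - 1/2) * (x - f x)"
    using drift_global[OF cont drift_pos_off_fixed_point[OF cont _ _ fix_unique] \<open>\<delta> > 0\<close> near] f_range
    by auto
  show thesis
    by (rule that[of c \<delta>], intro urn_drift.intro chain urn_drift_axioms.intro)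
       (use f_range \<open>c > 0\<close> \<open>\<delta> > 0\<close> global near in \<open>auto simp: less_imp_le\<close>)
qed

lemma ereal_partial_sums_converge_of_neg_part:
  fixes a :: "nat \<Rightarrow> real"
  assumes finite: "(\<Sum>k. ennreal (max 0 (- a k))) \<noteq> top"
  shows "\<exists>L. (\<lambda>n. ereal (\<Sum>k\<le>n. a k)) \<longlonglongrightarrow> L \<and> e2ennreal (- L) \<le> (\<Sum>k. ennreal (max 0 (- a k)))"
proof -
  define b where "b k = max 0 (- a k)" for k
  define p where "p k = max 0 (a k)" for k
  have summable_b: "summable b" using summable_suminf_not_top[of b] finite unfolding b_def by simp
  define q where "q = suminf b"
  have split: "(\<Sum>k\<le>n. a k) = (\<Sum>k\<le>n. p k) - (\<Sum>k\<le>n. b k)" for n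
    unfolding p_def b_def sum_subtractf[symmetric] by (intro sum.cong) auto
  have incseq_p: "incseq (\<lambda>n. ereal (\<Sum>k\<le>n. p k))"
    unfolding incseq_def p_def by (auto intro!: sum_mono2)
  define Lp where "Lp = (SUP n. ereal (\<Sum>k\<le>n. p k))"
  have pos_lim: "(\<lambda>n. ereal (\<Sum>k\<le>n. p k)) \<longlonglongrightarrow> Lp" unfolding Lp_def by (rule LIMSEQ_SUP[OF incseq_p])
  have neg_lim: "(\<lambda>n. ereal (- (\<Sum>k\<le>n. b k))) \<longlonglongrightarrow> ereal (- q)"
    unfolding q_def by (intro tendsto_intros summable_LIMSEQ'[OF summable_b])
  have sum_lim: "(\<lambda>n. ereal (\<Sum>k\<le>n. p k) + ereal (- (\<Sum>k\<le>n. b k))) \<longlonglongrightarrow> Lp + ereal (- q)"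
    by (rule tendsto_add_ereal_general1[OF _ pos_lim neg_lim]) simp
  have sum_eq: "ereal (\<Sum>k\<le>n. p k) + ereal (- (\<Sum>k\<le>n. b k)) = ereal (\<Sum>k\<le>n. a k)" for n
    unfolding split by simp
  have Lp_nonneg: "Lp \<ge> 0"
  proof -
    have "ereal (\<Sum>k\<le>0. p k) \<le> Lp" unfolding Lp_def by (rule SUP_upper) simp
    moreover have "(\<Sum>k\<le>0. p k) \<ge> 0" by (simp add: p_def)
    ultimately show ?thesis by (meson ereal_less_eq(5) order_trans)
  qed
  have "Lp + ereal (- q) \<ge> 0 + ereal (- q)" using Lp_nonneg by (intro add_right_mono)
  hence "- (Lp + ereal (- q)) \<le> ereal q" by (simp add: ereal_uminus_le_reorder)
  hence "e2ennreal (- (Lp + ereal (- q))) \<le> e2ennreal (ereal q)" by (rule e2ennreal_mono)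
  also have "\<dots> = (\<Sum>k. ennreal (max 0 (- a k)))"
    using suminf_ennreal2[of b, OF _ summable_b] unfolding q_def b_def by simp
  finally show ?thesis using sum_lim unfolding sum_eq by blast
qed

lemma ereal_partial_sums_converge_of_pos_part:
  fixes a :: "nat \<Rightarrow> real"
  assumes "(\<Sum>k. ennreal (max 0 (a k))) \<noteq> top"
  shows "\<exists>L. (\<lambda>n. ereal (\<Sum>k\<le>n. a k)) \<longlonglongrightarrow> L \<and> e2ennreal L \<le> (\<Sum>k. ennreal (max 0 (a k)))"
proof -
  obtain L where L: "(\<lambda>n. ereal (\<Sum>k\<le>n. - a k)) \<longlonglongrightarrow> L" "e2ennreal (- L) \<le> (\<Sum>k. ennreal (max 0 (a k)))"
    using ereal_partial_sums_converge_of_neg_part[of "\<lambda>k. - a k"] assms by auto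
  have "(\<lambda>n. - ereal (\<Sum>k\<le>n. - a k)) \<longlonglongrightarrow> - L" using L(1) by (rule tendsto_uminus_ereal)
  hence "(\<lambda>n. ereal (\<Sum>k\<le>n. a k)) \<longlonglongrightarrow> - L" by (simp add: sum_negf)
  thus ?thesis using L(2) by blast
qed

lemma AE_convergent_nn_integral_lim_less_top:
  fixes X :: "'a \<Rightarrow> nat \<Rightarrow> ereal" and S :: "'a \<Rightarrow> ennreal"
  assumes "S \<in> borel_measurable M" "(\<integral>\<^sup>+\<omega>. S \<omega> \<partial>M) < \<infinity>"
    and converge: "\<And>\<omega>. S \<omega> \<noteq> top \<Longrightarrow> \<exists>L. X \<omega> \<longlonglongrightarrow> L \<and> e2ennreal (g L) \<le> S \<omega>"
  shows "(AE \<omega> in M. \<exists>L. X \<omega> \<longlonglongrightarrow> L) \<and> (\<integral>\<^sup>+\<omega>. e2ennreal (g (lim (X \<omega>))) \<partial>M) < \<infinity>"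
proof -
  have "AE \<omega> in M. S \<omega> \<noteq> \<infinity>"
    using assms(1,2) by (intro nn_integral_PInf_AE) auto
  hence AE: "AE \<omega> in M. (\<exists>L. X \<omega> \<longlonglongrightarrow> L) \<and> e2ennreal (g (lim (X \<omega>))) \<le> S \<omega>"
  proof eventually_elim
    fix \<omega> assume "S \<omega> \<noteq> \<infinity>"
    then obtain L where "X \<omega> \<longlonglongrightarrow> L" "e2ennreal (g L) \<le> S \<omega>" using converge by auto
    moreover have "lim (X \<omega>) = L" using \<open>X \<omega> \<longlonglongrightarrow> L\<close> by (rule limI)
    ultimately show "(\<exists>L. X \<omega> \<longlonglongrightarrow> L) \<and> e2ennreal (g (lim (X \<omega>))) \<le> S \<omega>" by auto
  qed
  have "(\<integral>\<^sup>+\<omega>. e2ennreal (g (lim (X \<omega>))) \<partial>M) \<le> (\<integral>\<^sup>+\<omega>. S \<omega> \<partial>M)"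
    using AE by (intro nn_integral_mono_AE) auto
  with AE assms(2) show ?thesis by (auto elim: AE_mp)
qed

context urn_chain
begin

lemma urn_delta_converges:
  assumes "(\<integral>\<^sup>+\<omega>. urn_delta_minus f \<alpha> \<omega> \<partial>M) < \<infinity> \<or> (\<integral>\<^sup>+\<omega>. urn_delta_plus f \<alpha> \<omega> \<partial>M) < \<infinity>"
  shows "(AE \<omega> in M. \<exists>L. (\<lambda>n. ereal (urn_delta f \<alpha> n \<omega>)) \<longlonglongrightarrow> L)
    \<and> ((\<integral>\<^sup>+\<omega>. e2ennreal (lim (\<lambda>n. ereal (urn_delta f \<alpha> n \<omega>))) \<partial>M) < \<infinity>
       \<or> (\<integral>\<^sup>+\<omega>. e2ennreal (- lim (\<lambda>n. ereal (urn_delta f \<alpha> n \<omega>))) \<partial>M) < \<infinity>)"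
proof -
  have measurable: "(\<lambda>\<omega>. \<Sum>k. ennreal (h (\<alpha> k \<omega>))) \<in> borel_measurable M" for h
    by (intro borel_measurable_suminf_order measurable_compose[OF borel_measurable_fun_alpha measurable_ennreal])
  define X where "X \<omega> = (\<lambda>n. ereal (\<Sum>k\<le>n. 2 * f (\<alpha> k \<omega>) - 1))" for \<omega>
  from assms show ?thesis
  proof
    assume "(\<integral>\<^sup>+\<omega>. urn_delta_minus f \<alpha> \<omega> \<partial>M) < \<infinity>"
    from AE_convergent_nn_integral_lim_less_top[OF _ this, of X uminus]
    have "(AE \<omega> in M. \<exists>L. X \<omega> \<longlonglongrightarrow> L) \<and> (\<integral>\<^sup>+\<omega>. e2ennreal (- lim (X \<omega>)) \<partial>M) < \<infinity>"
      unfolding urn_delta_minus_def X_def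
      using measurable ereal_partial_sums_converge_of_neg_part[of "\<lambda>k. 2 * f (\<alpha> k _) - 1"] by simp
    thus ?thesis unfolding X_def urn_delta_def by blast
  next
    assume "(\<integral>\<^sup>+\<omega>. urn_delta_plus f \<alpha> \<omega> \<partial>M) < \<infinity>"
    from AE_convergent_nn_integral_lim_less_top[OF _ this, of X "\<lambda>L. L"]
    have "(AE \<omega> in M. \<exists>L. X \<omega> \<longlonglongrightarrow> L) \<and> (\<integral>\<^sup>+\<omega>. e2ennreal (lim (X \<omega>)) \<partial>M) < \<infinity>"
      unfolding urn_delta_plus_def X_def
      using measurable ereal_partial_sums_converge_of_pos_part[of "\<lambda>k. 2 * f (\<alpha> k _) - 1"] by simp
    thus ?thesis unfolding X_def urn_delta_def by blast
  qed
qed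

end

theorem proposition2:
  fixes f f1 f2 f3 :: "real \<Rightarrow> real"
    and M :: "'a measure"
    and \<alpha> l :: "nat \<Rightarrow> 'a \<Rightarrow> real"
  assumes f_range: "\<forall>x\<in>{0..1}. 0 < f x \<and> f x < 1"
    and d1: "\<forall>x\<in>{0..1}. (f has_real_derivative f1 x) (at x within {0..1})"
    and d2: "\<forall>x\<in>{0..1}. (f1 has_real_derivative f2 x) (at x within {0..1})"
    and d3: "\<forall>x\<in>{0..1}. (f2 has_real_derivative f3 x) (at x within {0..1})"
    and cont3: "continuous_on {0..1} f3"
    and fixpt: "f (1/2) = 1/2"
    and fix_unique: "\<forall>x\<in>{0..1}. f x = x \<longrightarrow> x = 1/2"
    and deriv_zero: "f1 (1/2) = 0"
    and urn: "urn_process M f \<alpha> l"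
  shows "(f2 (1/2) > 0 \<longrightarrow> (\<integral>\<^sup>+\<omega>. urn_delta_minus f \<alpha> \<omega> \<partial>M) < \<infinity>)
       \<and> (f2 (1/2) < 0 \<longrightarrow> (\<integral>\<^sup>+\<omega>. urn_delta_plus f \<alpha> \<omega> \<partial>M) < \<infinity>)
       \<and> (f2 (1/2) = 0 \<longrightarrow> (\<integral>\<^sup>+\<omega>. urn_delta_minus f \<alpha> \<omega> \<partial>M) < \<infinity>
                         \<and> (\<integral>\<^sup>+\<omega>. urn_delta_plus f \<alpha> \<omega> \<partial>M) < \<infinity>)
       \<and> (AE \<omega> in M. \<exists>L :: ereal. (\<lambda>n. ereal (urn_delta f \<alpha> n \<omega>)) \<longlonglongrightarrow> L)
       \<and> ((\<integral>\<^sup>+\<omega>. e2ennreal (lim (\<lambda>n. ereal (urn_delta f \<alpha> n \<omega>))) \<partial>M) < \<infinity>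
          \<or> (\<integral>\<^sup>+\<omega>. e2ennreal (- lim (\<lambda>n. ereal (urn_delta f \<alpha> n \<omega>))) \<partial>M) < \<infinity>)"
proof -
  obtain a0 l0 where chain: "urn_chain M f \<alpha> l a0 l0"
    using urn by (rule urn_process_imp_urn_chain)
  obtain B where "B \<ge> 0" and taylor:
    "\<And>x. x \<in> {0..1} \<Longrightarrow> \<bar>f x - 1/2 - f2 (1/2) / 2 * (x - 1/2)^2\<bar> \<le> B * \<bar>x - 1/2\<bar>^3"
    using taylor_order_two_at_half[OF d1 d2 d3 cont3] fixpt deriv_zero by auto
  have "continuous_on {0..1} f"
    by (rule DERIV_continuous_on) (use d1 in auto)
  then obtain c \<delta> where "urn_drift M f \<alpha> l a0 l0 c \<delta>"
    using urn_chain_imp_urn_drift[OF chain f_range _ fix_unique taylor \<open>B \<ge> 0\<close>] by blast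
  then interpret urn_drift M f \<alpha> l a0 l0 c \<delta> .
  have minus: "(\<integral>\<^sup>+\<omega>. urn_delta_minus f \<alpha> \<omega> \<partial>M) < \<infinity>" if "0 \<le> f2 (1/2)"
    unfolding urn_delta_minus_def
    by (rule nn_integral_suminf_fun_alpha_less_top[of _ "2 * B"])
       (use neg_part_le_of_taylor[OF taylor that] in auto)
  have plus: "(\<integral>\<^sup>+\<omega>. urn_delta_plus f \<alpha> \<omega> \<partial>M) < \<infinity>" if "f2 (1/2) \<le> 0"
    unfolding urn_delta_plus_def
    by (rule nn_integral_suminf_fun_alpha_less_top[of _ "2 * B"])
       (use pos_part_le_of_taylor[OF taylor that] in auto)
  have "(\<integral>\<^sup>+\<omega>. urn_delta_minus f \<alpha> \<omega> \<partial>M) < \<infinity> \<or> (\<integral>\<^sup>+\<omega>. urn_delta_plus f \<alpha> \<omega> \<partial>M) < \<infinity>"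
    using minus plus by linarith
  with minus plus urn_delta_converges show ?thesis by auto
qed

end
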